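(* The $7$-dimensional nilpotent Lie algebra $(0,0,0,0,12,34,36)$ admits no calibrated $\mathrm{G}_2$-structure; more precisely, for every closed $\phi\in\Lambda^3\mathfrak g^*$ the $2$-form $e_7\lrcorner\,\phi$ lies in the span of $e^{13},e^{23},e^{34},e^{12},e^{36},e^{46}$ and satisfies $(e_7\lrcorner\,\phi)^3=0$.
   Context: Notation: $(a_1,\dots,a_n)$ denotes the Lie algebra having a basis $e^1,\dots,e^n$ of its dual with $de^i=a_i$, where e.g. "$12$" stands for $e^{12}=e^1\wedge e^2$; $e_1,\dots,e_n$ is the dual basis of $\mathfrak g$. A $3$-form on a $7$-dimensional Lie algebra defines a $\mathrm{G}_2$-structure if in some basis $f^1,\dots,f^7$ of $\mathfrak g^*$ it equals $f^{127}+f^{347}+f^{567}+f^{135}-f^{236}-f^{146}-f^{245}$; it is calibrated if it is closed under the Chevalley–Eilenberg differential $d$. *)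

theory Defs
  imports "HOL-Combinatorics.Permutations" Complex_Main
begin

text \<open>The Lie algebra g has basis e_1..e_7 (indices 1..7 as nat).
A k-form on g is represented by its values on basis vectors,
alpha(e_a1,...,e_ak), as a function of the indices; the form is alternating.
Convention for the Chevalley-Eilenberg differential: d alpha(x,y) = - alpha([x,y])
on 1-forms, and for 3-forms the standard formula
d phi(x0,x1,x2,x3) = sum_{i<j} (-1)^(i+j) phi([xi,xj], ...).\<close>

definition idx :: "nat set" where "idx = {1..7}"

text \<open>value of the elementary 2-form e^{pq} on (e_i,e_j)\<close>
definition e2 :: "nat \<Rightarrow> nat \<Rightarrow> nat \<Rightarrow> nat \<Rightarrow> real" where
  "e2 p q i j = (if p = i \<and> q = j then 1 else 0) - (if p = j \<and> q = i then 1 else 0)"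

text \<open>The Lie algebra (0,0,0,0,12,34,36): dE k i j = (de^k)(e_i,e_j).\<close>
definition dE :: "nat \<Rightarrow> nat \<Rightarrow> nat \<Rightarrow> real" where
  "dE k i j = (if k = 5 then e2 1 2 i j else if k = 6 then e2 3 4 i j
              else if k = 7 then e2 3 6 i j else 0)"

text \<open>k-th component of the bracket [e_a,e_b] = - sum_k de^k(e_a,e_b) e_k\<close>
definition br :: "nat \<Rightarrow> nat \<Rightarrow> nat \<Rightarrow> real" where
  "br k a b = - dE k a b"

definition alt3 :: "(nat \<Rightarrow> nat \<Rightarrow> nat \<Rightarrow> real) \<Rightarrow> bool" where
  "alt3 phi \<longleftrightarrow> (\<forall>a\<in>idx. \<forall>b\<in>idx. \<forall>c\<in>idx.
      phi a b c = - phi b a c \<and> phi a b c = - phi a c b)"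

text \<open>phi([e_a,e_b], e_c, e_d)\<close>
definition brapp :: "(nat \<Rightarrow> nat \<Rightarrow> nat \<Rightarrow> real) \<Rightarrow> nat \<Rightarrow> nat \<Rightarrow> nat \<Rightarrow> nat \<Rightarrow> real" where
  "brapp phi a b c d = (\<Sum>k\<in>idx. br k a b * phi k c d)"

definition d3 :: "(nat \<Rightarrow> nat \<Rightarrow> nat \<Rightarrow> real) \<Rightarrow> nat \<Rightarrow> nat \<Rightarrow> nat \<Rightarrow> nat \<Rightarrow> real" where
  "d3 phi x0 x1 x2 x3 =
     - brapp phi x0 x1 x2 x3 + brapp phi x0 x2 x1 x3 - brapp phi x0 x3 x1 x2
     - brapp phi x1 x2 x0 x3 + brapp phi x1 x3 x0 x2 - brapp phi x2 x3 x0 x1"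

definition closed3 :: "(nat \<Rightarrow> nat \<Rightarrow> nat \<Rightarrow> real) \<Rightarrow> bool" where
  "closed3 phi \<longleftrightarrow> (\<forall>a\<in>idx. \<forall>b\<in>idx. \<forall>c\<in>idx. \<forall>d\<in>idx. d3 phi a b c d = 0)"

definition det3 :: "real \<Rightarrow> real \<Rightarrow> real \<Rightarrow> real \<Rightarrow> real \<Rightarrow> real \<Rightarrow> real \<Rightarrow> real \<Rightarrow> real \<Rightarrow> real" where
  "det3 a11 a12 a13 a21 a22 a23 a31 a32 a33 =
     a11 * (a22 * a33 - a23 * a32) - a12 * (a21 * a33 - a23 * a31) + a13 * (a21 * a32 - a22 * a31)"

text \<open>Given f^i = sum_a P i a e^a, the value f^{ijk}(e_a,e_b,e_c).\<close>
definition f3 :: "(nat \<Rightarrow> nat \<Rightarrow> real) \<Rightarrow> nat \<Rightarrow> nat \<Rightarrow> nat \<Rightarrow> nat \<Rightarrow> nat \<Rightarrow> nat \<Rightarrow> real" where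
  "f3 P i j k a b c = det3 (P i a) (P i b) (P i c) (P j a) (P j b) (P j c) (P k a) (P k b) (P k c)"

definition g2form :: "(nat \<Rightarrow> nat \<Rightarrow> real) \<Rightarrow> nat \<Rightarrow> nat \<Rightarrow> nat \<Rightarrow> real" where
  "g2form P a b c = f3 P 1 2 7 a b c + f3 P 3 4 7 a b c + f3 P 5 6 7 a b c + f3 P 1 3 5 a b c
      - f3 P 2 3 6 a b c - f3 P 1 4 6 a b c - f3 P 2 4 5 a b c"

text \<open>phi is a G2-structure: phi equals the standard form in some basis f^1..f^7 of g*,
 f^i = sum_a P i a e^a with P invertible.\<close>
definition is_G2 :: "(nat \<Rightarrow> nat \<Rightarrow> nat \<Rightarrow> real) \<Rightarrow> bool" where
  "is_G2 phi \<longleftrightarrow> (\<exists>P Q :: nat \<Rightarrow> nat \<Rightarrow> real.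
      (\<forall>i\<in>idx. \<forall>k\<in>idx. (\<Sum>j\<in>idx. P i j * Q j k) = (if i = k then 1 else 0)) \<and>
      (\<forall>i\<in>idx. \<forall>k\<in>idx. (\<Sum>j\<in>idx. Q i j * P j k) = (if i = k then 1 else 0)) \<and>
      (\<forall>a\<in>idx. \<forall>b\<in>idx. \<forall>c\<in>idx. phi a b c = g2form P a b c))"

definition contr7 :: "(nat \<Rightarrow> nat \<Rightarrow> nat \<Rightarrow> real) \<Rightarrow> nat \<Rightarrow> nat \<Rightarrow> real" where
  "contr7 phi i j = phi 7 i j"

text \<open>omega \<wedge> omega \<wedge> omega evaluated on (e_{x 0},...,e_{x 5}), with the standard
 normalisation (alpha\<wedge>beta)(v) = 1/(k! l!) sum_sigma sgn(sigma) ...\<close>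
definition cube2 :: "(nat \<Rightarrow> nat \<Rightarrow> real) \<Rightarrow> (nat \<Rightarrow> nat) \<Rightarrow> real" where
  "cube2 w x = (1/8) * (\<Sum>s | s permutes {0..<6}.
      of_int (sign s) * w (x (s 0)) (x (s 1)) * w (x (s 2)) (x (s 3)) * w (x (s 4)) (x (s 5)))"

definition allowed_pairs :: "(nat \<times> nat) set" where
  "allowed_pairs = {(1,3),(2,3),(3,4),(1,2),(3,6),(4,6)}"

end

theory Submission
  imports Defs
begin

(* The proof has three independent parts.
   (1) Closedness. Nine instances of the equation d phi = 0 on quadruples of basis
       vectors each reduce, after sorting the indices of phi by alternation, to the
       vanishing of one component phi(e_7,e_a,e_b). With alternation this shows that
       omega = e_7 _| phi has only the components 13, 23, 34, 12, 36, 46; in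
       particular omega(e_a,e_b) = 0 as soon as a or b is 5 or 7.
   (2) The cube. omega^3 evaluated on six basis vectors vanishes if two of them
       coincide (the defining sum is alternating) and otherwise, by pigeonhole, one
       of them lies outside the five-element support {1,2,3,4,6} of omega.
   (3) Non-degeneracy. The standard G2 form is phi_0(u,v,w) = <u x v, w> for the
       octonionic cross product on R^7, and 2|u x v|^2 = sum_{i,j} (u_i v_j - u_j v_i)^2.
       If phi = phi_0 in the basis given by an invertible matrix P and
       phi(e_7,e_5,.) = 0, then the columns 7 and 5 of P have zero cross product,
       hence are parallel, contradicting invertibility. By (1), every closed phi
       has phi(e_7,e_5,.) = 0, so no closed phi is a G2-structure. *)

lemma idx_eq: "idx = {1,2,3,4,5,6,7}"
  by (auto simp: idx_def)

text \<open>Alternation, oriented so that the simplifier sorts the indices of a component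
  of an alternating 3-form into increasing order (or recognises it as zero).\<close>

lemma alt3_swap12:
  "alt3 phi \<Longrightarrow> b < a \<Longrightarrow> a \<in> idx \<Longrightarrow> b \<in> idx \<Longrightarrow> c \<in> idx \<Longrightarrow> phi a b c = - phi b a c"
  unfolding alt3_def by blast

lemma alt3_swap23:
  "alt3 phi \<Longrightarrow> c < b \<Longrightarrow> a \<in> idx \<Longrightarrow> b \<in> idx \<Longrightarrow> c \<in> idx \<Longrightarrow> phi a b c = - phi a c b"
  unfolding alt3_def by blast

lemma alt3_diag12: "alt3 phi \<Longrightarrow> a \<in> idx \<Longrightarrow> c \<in> idx \<Longrightarrow> phi a a c = 0"
  unfolding alt3_def by (metis neg_equal_zero)

lemma alt3_diag23: "alt3 phi \<Longrightarrow> a \<in> idx \<Longrightarrow> b \<in> idx \<Longrightarrow> phi a b b = 0"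
  unfolding alt3_def by (metis neg_equal_zero)

lemmas structure_constants = d3_def brapp_def br_def dE_def e2_def idx_eq


subsection \<open>Closedness forces most components of e_7 _| phi to vanish\<close>

text \<open>Each component below is the only surviving term of (d phi)(e_a,e_b,e_c,e_d)
  for the indicated quadruple; e.g. (d phi)(e_1,e_3,e_4,e_6) = - phi(e_7,e_1,e_4),
  coming from the bracket [e_3,e_6] = - e_7.\<close>

lemma closed_contr7_components:
  assumes A: "alt3 phi" and C: "closed3 phi"
  shows "contr7 phi 1 4 = 0" "contr7 phi 1 5 = 0" "contr7 phi 1 6 = 0"
    "contr7 phi 2 4 = 0" "contr7 phi 2 5 = 0" "contr7 phi 2 6 = 0"
    "contr7 phi 3 5 = 0" "contr7 phi 4 5 = 0" "contr7 phi 5 6 = 0"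
proof -
  note sort_indices = alt3_swap12[OF A] alt3_swap23[OF A] alt3_diag12[OF A] alt3_diag23[OF A]
  have closed_at: "d3 phi a b c d = 0" if "a \<in> idx" "b \<in> idx" "c \<in> idx" "d \<in> idx" for a b c d
    using C that unfolding closed3_def by blast
  note expand = contr7_def structure_constants sort_indices
  show "contr7 phi 1 4 = 0" using closed_at[of 1 3 4 6] by (simp add: expand)
  show "contr7 phi 1 5 = 0" using closed_at[of 1 3 5 6] by (simp add: expand)
  show "contr7 phi 1 6 = 0" using closed_at[of 1 3 4 7] by (simp add: expand)
  show "contr7 phi 2 4 = 0" using closed_at[of 2 3 4 6] by (simp add: expand)
  show "contr7 phi 2 5 = 0" using closed_at[of 2 3 5 6] by (simp add: expand)
  show "contr7 phi 2 6 = 0" using closed_at[of 2 3 4 7] by (simp add: expand)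
  show "contr7 phi 3 5 = 0" using closed_at[of 1 2 3 7] by (simp add: expand)
  show "contr7 phi 4 5 = 0" using closed_at[of 1 2 4 7] by (simp add: expand)
  show "contr7 phi 5 6 = 0" using closed_at[of 1 2 6 7] by (simp add: expand)
qed

lemma contr7_antisym:
  assumes "alt3 phi" "a \<in> idx" "b \<in> idx"
  shows "contr7 phi a b = - contr7 phi b a"
proof -
  have "(7::nat) \<in> idx" by (simp add: idx_def)
  then show ?thesis using assms unfolding alt3_def contr7_def by blast
qed

lemma contr7_diag: "alt3 phi \<Longrightarrow> a \<in> idx \<Longrightarrow> contr7 phi a a = 0"
  using alt3_diag23[of phi 7 a] unfolding contr7_def by (simp add: idx_def)

lemma contr7_with_7:
  assumes A: "alt3 phi" and b: "b \<in> idx"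
  shows "contr7 phi 7 b = 0" "contr7 phi b 7 = 0"
proof -
  have 7: "(7::nat) \<in> idx" by (simp add: idx_def)
  show "contr7 phi 7 b = 0" using alt3_diag12[OF A 7 b] by (simp add: contr7_def)
  then show "contr7 phi b 7 = 0" using contr7_antisym[OF A b 7] by simp
qed

lemma contr7_vanishes:
  assumes A: "alt3 phi" and C: "closed3 phi" and ab: "a \<in> idx" "b \<in> idx"
    and not_allowed: "(min a b, max a b) \<notin> allowed_pairs"
  shows "contr7 phi a b = 0"
proof -
  have sorted: "contr7 phi a b = 0"
    if "a < b" "a \<in> idx" "b \<in> idx" "(a, b) \<notin> allowed_pairs" for a b
    using that closed_contr7_components[OF A C] contr7_with_7[OF A]
    by (simp add: idx_eq allowed_pairs_def) (elim disjE; simp)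
  consider "a < b" | "b < a" | "a = b" by linarith
  then show ?thesis
  proof cases
    case 1
    then show ?thesis using sorted[of a b] ab not_allowed by (simp add: min_def max_def)
  next
    case 2
    then have "contr7 phi b a = 0" using sorted[of b a] ab not_allowed by (simp add: min_def max_def)
    then show ?thesis using contr7_antisym[OF A ab] by linarith
  next
    case 3
    then show ?thesis using contr7_diag[OF A ab(1)] by simp
  qed
qed

lemma contr7_support:
  assumes "alt3 phi" "closed3 phi" "a \<in> idx" "b \<in> idx"
    and "a \<notin> {1,2,3,4,6} \<or> b \<notin> {1,2,3,4,6}"
  shows "contr7 phi a b = 0"
proof (rule contr7_vanishes)
  show "(min a b, max a b) \<notin> allowed_pairs"
    using assms(5) by (auto simp: allowed_pairs_def min_def max_def)
qed (use assms in auto)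


subsection \<open>The cube of a 2-form with small support\<close>

text \<open>The cube is alternating in its six arguments: composing with the transposition
  of two equal arguments permutes the summands and flips their signs.\<close>

lemma cube2_repeated_vector:
  assumes ij: "i < 6" "j < 6" "i \<noteq> j" "x i = x j"
  shows "cube2 w x = 0"
proof -
  let ?S = "{s. s permutes {0..<(6::nat)}}"
  define g where "g s = of_int (sign s) * w (x (s 0)) (x (s 1)) * w (x (s 2)) (x (s 3))
      * w (x (s 4)) (x (s 5))" for s :: "nat \<Rightarrow> nat"
  let ?t = "transpose i j"
  have t_perm: "?t permutes {0..<6}" using ij by (intro permutes_swap_id) auto
  have x_t: "x (?t y) = x y" for y using ij by (cases "y = i"; cases "y = j") auto
  have g_odd: "g (?t \<circ> s) = - g s" if "s \<in> ?S" for s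
  proof -
    have "permutation ?t" "permutation s"
      using that t_perm permutes_imp_permutation[of "{0..<6}"] by auto
    then have "sign (?t \<circ> s) = sign ?t * sign s" by (rule sign_compose)
    then have "sign (?t \<circ> s) = - sign s" using sign_swap_id[of i j] ij by simp
    then show ?thesis unfolding g_def by (simp add: x_t)
  qed
  have "sum g ?S = sum (\<lambda>s. g (?t \<circ> s)) ?S" by (rule setum_permutations_compose_left[OF t_perm])
  also have "\<dots> = - sum g ?S" using g_odd by (simp add: sum_negf)
  finally have "sum g ?S = 0" by simp
  then show ?thesis unfolding cube2_def g_def by simp
qed

text \<open>If w (restricted to T) only involves fewer than six indices S, then w^3 vanishes on
  any six vectors from T: either two coincide, or one of them lies outside S and kills
  the factor of every summand containing it.\<close>

lemma cube2_small_support: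
  assumes S: "finite S" "card S < 6" and x: "\<forall>m<6. x m \<in> T"
    and support: "\<And>a b. a \<in> T \<Longrightarrow> b \<in> T \<Longrightarrow> a \<notin> S \<or> b \<notin> S \<Longrightarrow> w a b = 0"
  shows "cube2 w x = 0"
proof (cases "inj_on x {0..<6}")
  case False
  then obtain i j where "i < 6" "j < 6" "i \<noteq> j" "x i = x j" unfolding inj_on_def by auto
  then show ?thesis by (rule cube2_repeated_vector)
next
  case True
  have "\<not> x ` {0..<6} \<subseteq> S"
  proof
    assume "x ` {0..<6} \<subseteq> S"
    then have "card (x ` {0..<6}) \<le> card S" using S(1) by (rule card_mono[rotated])
    with card_image[OF True] S(2) show False by simp
  qed
  then obtain m where m: "m < 6" "x m \<notin> S" by (auto simp: image_subset_iff)
  have "of_int (sign s) * w (x (s 0)) (x (s 1)) * w (x (s 2)) (x (s 3)) * w (x (s 4)) (x (s 5)) = 0"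
    if s: "s permutes {0..<6}" for s
  proof -
    have factor_zero: "w (x (s a)) (x (s b)) = 0" if "a < 6" "b < 6" "s a = m \<or> s b = m" for a b
      using support x m permutes_in_image[OF s] that by auto
    obtain k where "k < 6" "s k = m"
      using m permutes_image[OF s] by (metis atLeast0LessThan imageE lessThan_iff)
    then have "k \<in> {0, 1, 2, 3, 4, 5}" "s k = m" by auto
    then show ?thesis using factor_zero[of 0 1] factor_zero[of 2 3] factor_zero[of 4 5] by auto
  qed
  then show ?thesis unfolding cube2_def by (simp add: sum.neutral)
qed


subsection \<open>Non-degeneracy of the standard G2 form\<close>

text \<open>The cross product on R^7 defined by the standard G2 form
  e^127 + e^347 + e^567 + e^135 - e^236 - e^146 - e^245.\<close>

definition cross :: "(nat \<Rightarrow> real) \<Rightarrow> (nat \<Rightarrow> real) \<Rightarrow> nat \<Rightarrow> real" where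
  "cross A B l =
    (if l = 1 then A 2*B 7 - A 7*B 2 + A 3*B 5 - A 5*B 3 - A 4*B 6 + A 6*B 4
     else if l = 2 then - A 1*B 7 + A 7*B 1 - A 3*B 6 + A 6*B 3 - A 4*B 5 + A 5*B 4
     else if l = 3 then A 4*B 7 - A 7*B 4 - A 1*B 5 + A 5*B 1 + A 2*B 6 - A 6*B 2
     else if l = 4 then - A 3*B 7 + A 7*B 3 + A 1*B 6 - A 6*B 1 + A 2*B 5 - A 5*B 2
     else if l = 5 then A 6*B 7 - A 7*B 6 + A 1*B 3 - A 3*B 1 - A 2*B 4 + A 4*B 2
     else if l = 6 then - A 5*B 7 + A 7*B 5 - A 2*B 3 + A 3*B 2 - A 1*B 4 + A 4*B 1
     else A 1*B 2 - A 2*B 1 + A 3*B 4 - A 4*B 3 + A 5*B 6 - A 6*B 5)"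

lemma g2form_cross: "g2form P a b c = (\<Sum>l\<in>idx. cross (\<lambda>i. P i a) (\<lambda>i. P i b) l * P l c)"
  by (simp add: g2form_def f3_def det3_def cross_def idx_eq algebra_simps)

text \<open>Lagrange's identity |A x B|^2 = |A|^2 |B|^2 - <A,B>^2, written with the 2x2 minors.\<close>

lemma cross_lagrange:
  "2 * (\<Sum>l\<in>idx. (cross A B l)^2) = (\<Sum>i\<in>idx. \<Sum>j\<in>idx. (A i * B j - A j * B i)^2)"
  by (simp add: cross_def idx_eq power2_eq_square algebra_simps)

lemma sum_squares_zero:
  fixes f :: "'a \<Rightarrow> 'a \<Rightarrow> real"
  assumes I: "finite I" and zero: "(\<Sum>i\<in>I. \<Sum>j\<in>I. (f i j)^2) = 0" and ij: "i \<in> I" "j \<in> I"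
  shows "f i j = 0"
proof -
  have "(\<Sum>j\<in>I. (f i j)^2) = 0"
    using zero ij sum_nonneg_eq_0_iff[OF I, of "\<lambda>i. \<Sum>j\<in>I. (f i j)^2"] by (simp add: sum_nonneg)
  then show ?thesis using ij sum_nonneg_eq_0_iff[OF I, of "\<lambda>j. (f i j)^2"] by simp
qed

lemma cross_zero_imp_parallel:
  assumes "\<forall>l\<in>idx. cross A B l = 0" "i \<in> idx" "j \<in> idx"
  shows "A i * B j = A j * B i"
proof -
  have "(\<Sum>i\<in>idx. \<Sum>j\<in>idx. (A i * B j - A j * B i)^2) = 0"
    using cross_lagrange[of A B] assms(1) by simp
  then show ?thesis
    using sum_squares_zero[of idx "\<lambda>i j. A i * B j - A j * B i"] assms by (simp add: idx_def)
qed

definition inverse_on_idx :: "(nat \<Rightarrow> nat \<Rightarrow> real) \<Rightarrow> (nat \<Rightarrow> nat \<Rightarrow> real) \<Rightarrow> bool" where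
  "inverse_on_idx P Q \<longleftrightarrow>
     (\<forall>i\<in>idx. \<forall>k\<in>idx. (\<Sum>j\<in>idx. P i j * Q j k) = (if i = k then 1 else 0)) \<and>
     (\<forall>i\<in>idx. \<forall>k\<in>idx. (\<Sum>j\<in>idx. Q i j * P j k) = (if i = k then 1 else 0))"

lemma recover_coordinates:
  assumes PQ: "inverse_on_idx P Q" and l: "l \<in> idx"
  shows "v l = (\<Sum>w\<in>idx. (\<Sum>k\<in>idx. v k * P k w) * Q w l)"
proof -
  have "v l = (\<Sum>k\<in>idx. if k = l then v k else 0)"
    using l by (simp add: idx_def)
  also have "\<dots> = (\<Sum>k\<in>idx. v k * (\<Sum>w\<in>idx. P k w * Q w l))"
    using PQ l unfolding inverse_on_idx_def by (intro sum.cong) auto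
  also have "\<dots> = (\<Sum>k\<in>idx. \<Sum>w\<in>idx. v k * P k w * Q w l)"
    by (simp add: sum_distrib_left mult.assoc)
  also have "\<dots> = (\<Sum>w\<in>idx. \<Sum>k\<in>idx. v k * P k w * Q w l)"
    by (rule sum.swap)
  also have "\<dots> = (\<Sum>w\<in>idx. (\<Sum>k\<in>idx. v k * P k w) * Q w l)"
    by (simp add: sum_distrib_right)
  finally show ?thesis .
qed

text \<open>Two distinct columns p, q of an invertible matrix are not parallel: otherwise row p
  of the inverse would annihilate column p (since it annihilates column q).\<close>

lemma columns_not_parallel:
  assumes PQ: "inverse_on_idx P Q" and pq: "p \<in> idx" "q \<in> idx" "p \<noteq> q"
    and parallel: "\<forall>i\<in>idx. \<forall>j\<in>idx. P i p * P j q = P j p * P i q"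
  shows False
proof -
  have QP: "(\<Sum>j\<in>idx. Q i j * P j k) = (if i = k then 1 else 0)" if "i \<in> idx" "k \<in> idx" for i k
    using PQ that unfolding inverse_on_idx_def by blast
  have column_p_zero: "P m p = 0" if m: "m \<in> idx" for m
  proof -
    have "P m p = P m p * (\<Sum>j\<in>idx. Q q j * P j q)" using QP pq by simp
    also have "\<dots> = (\<Sum>j\<in>idx. Q q j * (P m p * P j q))" by (simp add: sum_distrib_left algebra_simps)
    also have "\<dots> = (\<Sum>j\<in>idx. Q q j * (P j p * P m q))" using parallel m by (intro sum.cong) auto
    also have "\<dots> = P m q * (\<Sum>j\<in>idx. Q q j * P j p)" by (simp add: sum_distrib_left algebra_simps)
    also have "\<dots> = 0" using QP pq by simp
    finally show ?thesis .
  qed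
  have "(\<Sum>j\<in>idx. Q p j * P j p) = 0" using column_p_zero by simp
  with QP[of p p] pq show False by simp
qed

lemma g2form_nondegenerate:
  assumes PQ: "inverse_on_idx P Q" and pq: "p \<in> idx" "q \<in> idx" "p \<noteq> q"
    and vanish: "\<forall>w\<in>idx. g2form P p q w = 0"
  shows False
proof -
  let ?A = "\<lambda>i. P i p" and ?B = "\<lambda>i. P i q"
  have "cross ?A ?B l = 0" if l: "l \<in> idx" for l
    using recover_coordinates[OF PQ l, of "cross ?A ?B"] vanish
    by (simp add: g2form_cross[symmetric])
  then have "\<forall>i\<in>idx. \<forall>j\<in>idx. P i p * P j q = P j p * P i q"
    using cross_zero_imp_parallel[of ?A ?B] by blast
  then show False using columns_not_parallel[OF PQ pq] by blast
qed


text \<open>A closed phi satisfies phi(e_7,e_5,.) = 0, which no G2 form does.\<close>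

theorem no_calibrated_G2:
  assumes A: "alt3 phi" and C: "closed3 phi" and G: "is_G2 phi"
  shows False
proof -
  obtain P Q where PQ: "inverse_on_idx P Q"
    and phi: "\<forall>a\<in>idx. \<forall>b\<in>idx. \<forall>c\<in>idx. phi a b c = g2form P a b c"
    using G unfolding is_G2_def inverse_on_idx_def by blast
  have 5: "(5::nat) \<in> idx" and 7: "(7::nat) \<in> idx" by (simp_all add: idx_def)
  have "g2form P 7 5 w = 0" if w: "w \<in> idx" for w
    using phi 5 7 w contr7_support[OF A C 5 w] by (simp add: contr7_def)
  then show False using g2form_nondegenerate[OF PQ 7 5] by simp
qed

theorem mainTheorem8:
  shows "(\<not> (\<exists>phi. alt3 phi \<and> closed3 phi \<and> is_G2 phi)) \<and>
    (\<forall>phi. alt3 phi \<and> closed3 phi \<longrightarrow>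
       (\<forall>i\<in>idx. \<forall>j\<in>idx. i < j \<and> (i, j) \<notin> allowed_pairs \<longrightarrow> contr7 phi i j = 0) \<and>
       (\<forall>x. (\<forall>m<6. x m \<in> idx) \<longrightarrow> cube2 (contr7 phi) x = 0))"
proof (intro conjI allI impI ballI)
  show "\<not> (\<exists>phi. alt3 phi \<and> closed3 phi \<and> is_G2 phi)" using no_calibrated_G2 by blast
next
  fix phi assume "alt3 phi \<and> closed3 phi"
  then have A: "alt3 phi" and C: "closed3 phi" by simp_all
  {
    fix i j assume "i \<in> idx" "j \<in> idx" "i < j \<and> (i, j) \<notin> allowed_pairs"
    then show "contr7 phi i j = 0" using contr7_vanishes[OF A C] by simp
  next
    fix x :: "nat \<Rightarrow> nat" assume "\<forall>m<6. x m \<in> idx"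
    then show "cube2 (contr7 phi) x = 0"
      using cube2_small_support[where S = "{1,2,3,4,6}" and T = idx] contr7_support[OF A C]
      by simp
  }
qed

end
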